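(* For $\theta\in \mathrm{SL}_2(\mathbb Z)$ let $\widehat\theta\in\mathrm{Aut}_{\mathbb F}(\mathfrak{sl}_2)$ be $\widehat\theta(u)=\theta u\theta^{-1}$. The homomorphism $\theta\mapsto\widehat\theta$ from $\mathrm{SL}_2(\mathbb Z)$ to $\mathrm{Aut}_{\mathbb F}(\mathfrak{sl}_2)$ has kernel $\{\pm I\}$ and so induces an injective homomorphism $\imath:\mathrm{PSL}_2(\mathbb Z)\to \mathrm{Aut}_{\mathbb F}(\mathfrak{sl}_2)$. The image of $\imath$ is exactly the group $G$. In particular $G\cong \mathrm{PSL}_2(\mathbb Z)$.
   Context: $\mathbb F$ is a field of characteristic zero and $\mathfrak{sl}_2$ is the Lie algebra of $2\times 2$ trace-zero matrices over $\mathbb F$, with $\mathrm{ad}\,u(v)=[u,v]$. Let $x^*=\begin{pmatrix}1&-1\\1&-1\end{pmatrix}$, $y^*=\begin{pmatrix}0&0\\1&0\end{pmatrix}$, $z^*=\begin{pmatrix}0&-1\\0&0\end{pmatrix}$. These are nilpotent, so $\exp(\mathrm{ad}\,u)=\sum_{n\ge0}(\mathrm{ad}\,u)^n/n!$ is a well-defined automorphism of $\mathfrak{sl}_2$ for $u\in\{x^*,y^*,z^*\}$. $G$ is the subgroup of $\mathrm{Aut}_{\mathbb F}(\mathfrak{sl}_2)$ generated by $\exp(\mathrm{ad}\,x^* )$, $\exp(\mathrm{ad}\,y^* )$ and $\exp(\mathrm{ad}\,z^* )$. *)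

theory Defs
  imports "HOL-Analysis.Analysis" "HOL-Library.FuncSet"
begin

type_synonym 'a mat2 = "'a ^ 2 ^ 2"

definition sl2 :: "('a::field) mat2 set" where
  "sl2 = {A. trace A = 0}"

definition lie_bracket :: "('a::field) mat2 \<Rightarrow> 'a mat2 \<Rightarrow> 'a mat2" where
  "lie_bracket u v = u ** v - v ** u"

definition ad :: "('a::field) mat2 \<Rightarrow> 'a mat2 \<Rightarrow> 'a mat2" where
  "ad u = (\<lambda>v. lie_bracket u v)"

definition smat :: "'a::field \<Rightarrow> 'a mat2 \<Rightarrow> 'a mat2" where
  "smat c A = (\<chi> i j. c * A $ i $ j)"

definition exp_nil :: "(('a::field_char_0) mat2 \<Rightarrow> 'a mat2) \<Rightarrow> 'a mat2 \<Rightarrow> 'a mat2" where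
  "exp_nil f v = (\<Sum>n < (LEAST k. \<forall>w\<in>sl2. (f ^^ k) w = 0). smat (inverse (fact n)) ((f ^^ n) v))"

definition exp_ad :: "('a::field_char_0) mat2 \<Rightarrow> 'a mat2 \<Rightarrow> 'a mat2" where
  "exp_ad u = restrict (exp_nil (ad u)) sl2"

definition xs :: "('a::field) mat2" where
  "xs = vector [vector [1, -1], vector [1, -1]]"
definition ys :: "('a::field) mat2" where
  "ys = vector [vector [0, 0], vector [1, 0]]"
definition zs :: "('a::field) mat2" where
  "zs = vector [vector [0, -1], vector [0, 0]]"

definition Aut_sl2 :: "(('a::field) mat2 \<Rightarrow> 'a mat2) set" where
  "Aut_sl2 = {\<phi>. \<phi> \<in> extensional sl2 \<and> bij_betw \<phi> sl2 sl2
     \<and> (\<forall>u\<in>sl2. \<forall>v\<in>sl2. \<forall>a b. \<phi> (smat a u + smat b v) = smat a (\<phi> u) + smat b (\<phi> v))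
     \<and> (\<forall>u\<in>sl2. \<forall>v\<in>sl2. \<phi> (lie_bracket u v) = lie_bracket (\<phi> u) (\<phi> v))}"

definition gens :: "(('a::field_char_0) mat2 \<Rightarrow> 'a mat2) set" where
  "gens = {exp_ad xs, exp_ad ys, exp_ad zs}"

text \<open>G: the subgroup of Aut(sl_2) generated by the three automorphisms
  (closure of the identity under composition with generators and their inverses).\<close>
inductive_set Ggrp :: "(('a::field_char_0) mat2 \<Rightarrow> 'a mat2) set" where
  Gid: "restrict id sl2 \<in> Ggrp"
| Ggen: "g \<in> Ggrp \<Longrightarrow> s \<in> gens \<Longrightarrow> restrict (s \<circ> g) sl2 \<in> Ggrp"
| Ginv: "g \<in> Ggrp \<Longrightarrow> s \<in> gens \<Longrightarrow> restrict (inv_into sl2 s \<circ> g) sl2 \<in> Ggrp"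

definition SL2Z :: "int mat2 set" where
  "SL2Z = {\<theta>. det \<theta> = 1}"

definition hat :: "int mat2 \<Rightarrow> ('a::field_char_0) mat2 \<Rightarrow> 'a mat2" where
  "hat \<theta> = restrict (\<lambda>u. map_matrix of_int \<theta> ** u ** matrix_inv (map_matrix of_int \<theta>)) sl2"

end

theory Submission
  imports Defs
begin

(* For a unimodular 2x2 matrix P the inverse is the adjugate adj P, so conjugation is
   cj P u = P u adj P; it preserves trace zero, is linear, respects the commutator and
   satisfies cj P o cj Q = cj (P Q).  Hence every hat theta is an automorphism, theta -> hat
   theta is a homomorphism, and conjugating the matrix units E_12, E_21 shows that the kernel
   is {I, -I}.

   For the image we compute the three generators: ad u is nilpotent of index 3 for
   u in {x*, y*, z*}, so exp(ad u) = 1 + ad u + (ad u)^2/2, which equals hat of the integer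
   matrices X = [2 -1; 1 0], Y = [1 0; 1 1], Z = [1 -1; 0 1].  Thus G lies in the image
   (inverses of generators are hat of adjugates).  Conversely, a Euclidean-algorithm
   induction on |theta_21| shows that SL_2(Z) is generated by Y and Z, so every hat theta
   is reached from the identity by applying generators of G and their inverses. *)

lemma mat2_eq:
  "(A::'a^2^2) = B \<longleftrightarrow> A$1$1 = B$1$1 \<and> A$1$2 = B$1$2 \<and> A$2$1 = B$2$1 \<and> A$2$2 = B$2$2"
  by (auto simp: vec_eq_iff forall_2)

lemma mult2: "((A::'a::semiring_1^2^2) ** B) $ i $ j = A$i$1 * B$1$j + A$i$2 * B$2$j"
  by (simp add: matrix_matrix_mult_def sum_2)

lemma mat2_ent:
  "(mat k :: 'a::zero^2^2)$1$1 = k" "(mat k :: 'a::zero^2^2)$2$2 = k"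
  "(mat k :: 'a::zero^2^2)$1$2 = 0" "(mat k :: 'a::zero^2^2)$2$1 = 0"
  by (simp_all add: mat_def)

lemma sl2_iff: "(A::'a::field^2^2) \<in> sl2 \<longleftrightarrow> A$2$2 = - A$1$1"
  by (auto simp: sl2_def trace_def sum_2 eq_neg_iff_add_eq_0 add.commute)

lemma smat_ent [simp]: "smat c A $ i $ j = c * A $ i $ j"
  by (simp add: smat_def)

lemma ad_ent: "ad u v $ i $ j = (u ** v) $ i $ j - (v ** u) $ i $ j"
  by (simp add: ad_def lie_bracket_def)

text \<open>Matrix multiplication distributes over differences (the library only has sums).\<close>

lemma matrix_diff_ldistrib: "(A::'a::ring_1^'n^'m) ** (B - C) = A ** B - A ** C"
  by (simp add: matrix_matrix_mult_def vec_eq_iff sum_subtractf right_diff_distrib)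

lemma matrix_diff_rdistrib: "((B::'a::ring_1^'n^'m) - C) ** A = B ** A - C ** A"
  by (simp add: matrix_matrix_mult_def vec_eq_iff sum_subtractf left_diff_distrib)

lemma sl2_lincomb: "u \<in> sl2 \<Longrightarrow> v \<in> sl2 \<Longrightarrow> smat a u + smat b v \<in> sl2"
  by (simp add: sl2_iff algebra_simps)

lemma sl2_bracket: "lie_bracket u v \<in> (sl2::('a::field^2^2) set)"
  by (simp add: sl2_iff lie_bracket_def mult2 algebra_simps)

definition mk :: "'a::zero \<Rightarrow> 'a \<Rightarrow> 'a \<Rightarrow> 'a \<Rightarrow> 'a^2^2" where
  "mk a b c d = vector [vector [a, b], vector [c, d]]"

lemma mk_ent [simp]:
  "mk a b c d $1$1 = a" "mk a b c d $1$2 = b" "mk a b c d $2$1 = c" "mk a b c d $2$2 = d"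
  by (simp_all add: mk_def)

definition adj2 :: "'a::comm_ring_1^2^2 \<Rightarrow> 'a^2^2" where
  "adj2 A = mk (A$2$2) (- A$1$2) (- A$2$1) (A$1$1)"

lemma adj2_ent [simp]:
  "adj2 A $1$1 = A$2$2" "adj2 A $1$2 = - A$1$2" "adj2 A $2$1 = - A$2$1" "adj2 A $2$2 = A$1$1"
  by (simp_all add: adj2_def)

lemma adj2_mult: "adj2 P ** P = mat (det P)" "P ** adj2 P = mat (det P)"
  by (simp_all add: mat2_eq mult2 mat2_ent det_2 algebra_simps)

lemma adj2_adj2 [simp]: "adj2 (adj2 P) = P"
  by (simp add: mat2_eq)

lemma adj2_prod: "adj2 (A ** B) = adj2 B ** adj2 A"
  by (simp add: mat2_eq mult2 algebra_simps)

lemma det_adj2: "det (adj2 P) = det P"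
  by (simp add: det_2 algebra_simps)

text \<open>A matrix of determinant one is inverted by its adjugate; this turns the
  choice-based \<open>matrix_inv\<close> in the definition of hat into a formula.\<close>

lemma matrix_inv_det1:
  fixes A :: "'a::field^2^2"
  assumes "det A = 1"
  shows "matrix_inv A = adj2 A"
proof -
  have adj: "A ** adj2 A = mat 1" "adj2 A ** A = mat 1"
    using assms by (simp_all add: adj2_mult)
  have inv: "A ** matrix_inv A = mat 1 \<and> matrix_inv A ** A = mat 1"
    unfolding matrix_inv_def by (rule someI[of _ "adj2 A"]) (use adj in auto)
  have "matrix_inv A = adj2 A ** (A ** matrix_inv A)"
    by (simp add: matrix_mul_assoc adj)
  with inv show ?thesis by simp
qed

definition cj :: "'a::comm_ring_1^2^2 \<Rightarrow> 'a^2^2 \<Rightarrow> 'a^2^2" where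
  "cj P u = P ** u ** adj2 P"

lemma cj_sl2: "det P = 1 \<Longrightarrow> u \<in> sl2 \<Longrightarrow> cj P u \<in> (sl2 :: ('a::field^2^2) set)"
  by (simp add: sl2_iff cj_def mult2 det_2 algebra_simps)

lemma cj_cj: "cj P (cj Q u) = cj (P ** Q) u"
  by (simp add: cj_def adj2_prod matrix_mul_assoc)

lemma cj_adj2: "det P = 1 \<Longrightarrow> cj (adj2 P) (cj P u) = u" "det P = 1 \<Longrightarrow> cj P (cj (adj2 P) u) = u"
  unfolding cj_cj cj_def adj2_adj2
  by (metis adj2_mult matrix_mul_assoc matrix_mul_lid matrix_mul_rid)+

lemma cj_lincomb: "cj P (smat a u + smat b v) = smat a (cj P u) + smat b (cj P v)"
  by (simp add: cj_def mat2_eq mult2 algebra_simps)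

lemma cj_bracket:
  assumes "det P = 1"
  shows "cj P (lie_bracket u v) = lie_bracket (cj P u) (cj P v)"
proof -
  have cancel: "P ** x ** adj2 P ** P ** y ** adj2 P = P ** x ** y ** adj2 P" for x y
  proof -
    have "P ** x ** adj2 P ** P ** y ** adj2 P = P ** x ** (adj2 P ** P) ** y ** adj2 P"
      by (simp add: matrix_mul_assoc)
    also have "\<dots> = P ** x ** y ** adj2 P"
      using assms by (simp add: adj2_mult)
    finally show ?thesis .
  qed
  show ?thesis
    by (simp add: cj_def lie_bracket_def matrix_diff_ldistrib matrix_diff_rdistrib
        matrix_mul_assoc cancel)
qed

section \<open>The homomorphism theta \<mapsto> hat theta\<close>

abbreviation of_int_mat :: "int^2^2 \<Rightarrow> 'a::field_char_0^2^2" where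
  "of_int_mat \<equiv> map_matrix of_int"

lemma SL2Z_mult: "a \<in> SL2Z \<Longrightarrow> b \<in> SL2Z \<Longrightarrow> a ** b \<in> SL2Z"
  by (simp add: SL2Z_def det_mul)

lemma SL2Z_adj2: "t \<in> SL2Z \<Longrightarrow> adj2 t \<in> SL2Z"
  by (simp add: SL2Z_def det_adj2)

lemma det_of_int_mat: "det (of_int_mat t :: 'a::field_char_0^2^2) = of_int (det t)"
  by (simp add: det_2)

lemma SL2Z_det: "t \<in> SL2Z \<Longrightarrow> det (of_int_mat t :: 'a::field_char_0^2^2) = 1"
  by (simp add: det_of_int_mat SL2Z_def)

lemma of_int_mat_mult: "of_int_mat (A ** B) = (of_int_mat A ** of_int_mat B :: 'a::field_char_0^2^2)"
  by (simp add: mat2_eq mult2)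

lemma of_int_mat_adj2: "of_int_mat (adj2 A) = (adj2 (of_int_mat A) :: 'a::field_char_0^2^2)"
  by (simp add: mat2_eq)

lemma hat_eq: "t \<in> SL2Z \<Longrightarrow> u \<in> sl2 \<Longrightarrow> hat t u = cj (of_int_mat t) (u::'a::field_char_0^2^2)"
  by (simp add: hat_def matrix_inv_det1 SL2Z_det cj_def)

lemma hat_sl2: "t \<in> SL2Z \<Longrightarrow> u \<in> sl2 \<Longrightarrow> hat t u \<in> (sl2::('a::field_char_0^2^2) set)"
  by (simp add: hat_eq cj_sl2 SL2Z_det)

lemma hat_adj2:
  assumes "t \<in> SL2Z" "u \<in> sl2"
  shows "hat (adj2 t) (hat t u) = (u::'a::field_char_0 mat2)" "hat t (hat (adj2 t) u) = u"
  using assms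
  by (simp_all add: hat_eq hat_sl2 SL2Z_adj2 of_int_mat_adj2 cj_adj2 SL2Z_det cj_sl2 det_adj2)

lemma hat_aut: "t \<in> SL2Z \<Longrightarrow> (hat t :: 'a::field_char_0 mat2 \<Rightarrow> 'a mat2) \<in> Aut_sl2"
proof -
  assume t: "t \<in> SL2Z"
  have "bij_betw (hat t) sl2 (sl2::'a mat2 set)"
    by (rule bij_betw_byWitness[where f'="hat (adj2 t)"])
       (use t hat_adj2[OF t] in \<open>auto intro: hat_sl2 SL2Z_adj2\<close>)
  moreover have "hat t \<in> extensional sl2"
    by (simp add: hat_def)
  ultimately show ?thesis
    unfolding Aut_sl2_def using t
    by (simp add: hat_eq sl2_lincomb sl2_bracket cj_lincomb cj_bracket SL2Z_det)
qed

lemma hat_mult: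
  assumes "t1 \<in> SL2Z" "t2 \<in> SL2Z"
  shows "(hat (t1 ** t2) :: 'a::field_char_0 mat2 \<Rightarrow> 'a mat2) = restrict (hat t1 \<circ> hat t2) sl2"
proof
  fix u :: "'a mat2"
  show "hat (t1 ** t2) u = restrict (hat t1 \<circ> hat t2) sl2 u"
  proof (cases "u \<in> sl2")
    case True
    then show ?thesis
      using assms SL2Z_mult[OF assms] by (simp add: hat_eq hat_sl2 cj_cj of_int_mat_mult cj_sl2 SL2Z_det)
  qed (simp add: hat_def)
qed

definition E12 :: "'a::field mat2" where "E12 = mk 0 1 0 0"
definition E21 :: "'a::field mat2" where "E21 = mk 0 0 1 0"

text \<open>The kernel: fixing E12 and E21 forces theta to be diagonal, hence \<open>\<plusminus>I\<close>.\<close>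

lemma hat_kernel:
  "{t\<in>SL2Z. (hat t :: 'a::field_char_0 mat2 \<Rightarrow> 'a mat2) = restrict id sl2} = {mat 1, - mat 1}"
proof (intro equalityI subsetI)
  fix t assume "t \<in> {t\<in>SL2Z. (hat t :: 'a mat2 \<Rightarrow> 'a mat2) = restrict id sl2}"
  then have t: "t \<in> SL2Z" and h: "(hat t :: 'a mat2 \<Rightarrow> 'a mat2) = restrict id sl2" by auto
  have "E12 \<in> (sl2 :: 'a mat2 set)" "E21 \<in> (sl2 :: 'a mat2 set)"
    by (simp_all add: sl2_iff E12_def E21_def)
  then have "cj (of_int_mat t) E12 = (E12 :: 'a mat2)" "cj (of_int_mat t) E21 = (E21 :: 'a mat2)"
    using h t by (metis hat_eq id_apply restrict_apply)+
  then have off_diag: "t$2$1 = 0" "t$1$2 = 0"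
    by (simp_all add: cj_def mat2_eq mult2 E12_def E21_def)
  then have "t$1$1 * t$2$2 = 1" using t by (simp add: SL2Z_def det_2)
  then have "(t$1$1 = 1 \<and> t$2$2 = 1) \<or> (t$1$1 = -1 \<and> t$2$2 = -1)" by (simp add: zmult_eq_1_iff)
  with off_diag show "t \<in> {mat 1, - mat 1}" by (auto simp: mat2_eq mat2_ent)
next
  fix t :: "int mat2" assume "t \<in> {mat 1, - mat 1}"
  then show "t \<in> {t\<in>SL2Z. (hat t :: 'a mat2 \<Rightarrow> 'a mat2) = restrict id sl2}"
    by (auto simp: SL2Z_def det_2 mat2_ent hat_eq cj_def mat2_eq mult2 intro!: ext)
       (auto simp: hat_def)
qed

lemma SL2Z_one: "mat 1 \<in> SL2Z"
  by (simp add: SL2Z_def det_I)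

lemma hat_one: "(hat (mat 1) :: 'a::field_char_0 mat2 \<Rightarrow> 'a mat2) = restrict id sl2"
  using hat_kernel[where 'a='a] by blast

section \<open>The generators of G are images of integer matrices\<close>

lemma ad_funpow_zero: "(ad u ^^ k) (0::'a::field mat2) = 0"
  by (induct k) (simp_all add: ad_def lie_bracket_def)

text \<open>If (ad u)^3 vanishes, the exponential series stops after the quadratic term
  (the summation bound in \<open>exp_nil\<close> is the nilpotency index, which is at most 3).\<close>

lemma exp_ad_cubic:
  fixes u :: "'a::field_char_0 mat2"
  assumes nil3: "\<And>w. ad u (ad u (ad u w)) = 0" and v: "v \<in> sl2"
  shows "exp_ad u v = v + ad u v + smat (1/2) (ad u (ad u v))"
proof -
  define P where "P k = (\<forall>w\<in>sl2. (ad u ^^ k) w = 0)" for k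
  define L where "L = (LEAST k. P k)"
  have P3: "P 3" using nil3 by (simp add: P_def numeral_3_eq_3)
  then have L3: "L \<le> 3" unfolding L_def by (rule Least_le)
  have PL: "P L" unfolding L_def using P3 by (rule LeastI)
  define series_term where "series_term n = smat (inverse (fact n)) ((ad u ^^ n) v)" for n
  have "exp_ad u v = sum series_term {..<L}"
    using v by (simp add: exp_ad_def exp_nil_def series_term_def L_def P_def)
  also have "\<dots> = sum series_term {..<3}"
  proof (rule sum.mono_neutral_left)
    show "\<forall>i\<in>{..<3} - {..<L}. series_term i = 0"
    proof
      fix i assume "i \<in> {..<3} - {..<L}"
      then have "(ad u ^^ i) v = (ad u ^^ (i - L)) ((ad u ^^ L) v)"
        by (metis funpow_add o_apply le_add_diff_inverse2 Diff_iff lessThan_iff not_less)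
      also have "\<dots> = 0" using PL v by (simp add: P_def ad_funpow_zero)
      finally show "series_term i = 0" by (simp add: series_term_def smat_def vec_eq_iff)
    qed
  qed (use L3 in auto)
  also have "\<dots> = v + ad u v + smat (1/2) (ad u (ad u v))"
    by (simp add: series_term_def eval_nat_numeral mat2_eq)
  finally show ?thesis .
qed

lemma exp_ad_eq_hat:
  fixes u :: "'a::field_char_0 mat2"
  assumes T: "T \<in> SL2Z"
    and nil3: "\<And>w. ad u (ad u (ad u w)) = 0"
    and agree: "\<And>v. v \<in> sl2 \<Longrightarrow> v + ad u v + smat (1/2) (ad u (ad u v)) = cj (of_int_mat T) v"
  shows "exp_ad u = hat T"
proof
  fix v :: "'a mat2"
  show "exp_ad u v = hat T v"
  proof (cases "v \<in> sl2")
    case True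
    then show ?thesis by (simp add: exp_ad_cubic[OF nil3] agree hat_eq T)
  qed (simp add: exp_ad_def hat_def)
qed

definition Mx :: "int mat2" where "Mx = mk 2 (-1) 1 0"
definition My :: "int mat2" where "My = mk 1 0 1 1"
definition Mz :: "int mat2" where "Mz = mk 1 (-1) 0 1"

lemma SL2Z_generators: "Mx \<in> SL2Z" "My \<in> SL2Z" "Mz \<in> SL2Z"
  by (simp_all add: SL2Z_def det_2 Mx_def My_def Mz_def)

lemma gens_eq_hat: "(gens :: ('a::field_char_0 mat2 \<Rightarrow> 'a mat2) set) = {hat Mx, hat My, hat Mz}"
proof -
  have "exp_ad xs = (hat Mx :: 'a mat2 \<Rightarrow> 'a mat2)"
    by (rule exp_ad_eq_hat[OF SL2Z_generators(1)])
       (simp_all add: sl2_iff cj_def mat2_eq ad_ent mult2 xs_def Mx_def algebra_simps)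
  moreover have "exp_ad ys = (hat My :: 'a mat2 \<Rightarrow> 'a mat2)"
    by (rule exp_ad_eq_hat[OF SL2Z_generators(2)])
       (simp_all add: sl2_iff cj_def mat2_eq ad_ent mult2 ys_def My_def algebra_simps)
  moreover have "exp_ad zs = (hat Mz :: 'a mat2 \<Rightarrow> 'a mat2)"
    by (rule exp_ad_eq_hat[OF SL2Z_generators(3)])
       (simp_all add: sl2_iff cj_def mat2_eq ad_ent mult2 zs_def Mz_def algebra_simps)
  ultimately show ?thesis by (simp add: gens_def)
qed

section \<open>G is contained in the image\<close>

lemma inv_hat_comp:
  assumes S: "S \<in> SL2Z" and t: "t \<in> SL2Z"
  shows "restrict (inv_into sl2 (hat S) \<circ> hat t) sl2 = (hat (adj2 S ** t) :: 'a::field_char_0 mat2 \<Rightarrow> 'a mat2)"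
proof
  fix u :: "'a mat2"
  show "restrict (inv_into sl2 (hat S) \<circ> hat t) sl2 u = hat (adj2 S ** t) u"
  proof (cases "u \<in> sl2")
    case True
    have inj: "inj_on (hat S) (sl2::'a mat2 set)"
      using hat_aut[OF S] unfolding Aut_sl2_def bij_betw_def by blast
    have comp: "hat (adj2 S ** t) u = hat (adj2 S) (hat t u)"
      using hat_mult[OF SL2Z_adj2[OF S] t, where 'a='a] True by simp
    have "hat S (hat (adj2 S ** t) u) = hat t u"
      using comp hat_adj2(2)[OF S hat_sl2[OF t True]] by simp
    then have "inv_into sl2 (hat S) (hat t u) = hat (adj2 S ** t) u"
      using inv_into_f_f[OF inj hat_sl2[OF SL2Z_mult[OF SL2Z_adj2[OF S] t] True]] by simp
    with True show ?thesis by simp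
  qed (simp add: hat_def)
qed

lemma Ggrp_subset_image: "g \<in> Ggrp \<Longrightarrow> g \<in> (hat ` SL2Z :: ('a::field_char_0 mat2 \<Rightarrow> 'a mat2) set)"
proof (induction rule: Ggrp.induct)
  case Gid
  then show ?case using hat_one[where 'a='a] SL2Z_one by (metis image_eqI)
next
  case (Ggen g s)
  then obtain t S where ts: "t \<in> SL2Z" "g = hat t" "S \<in> SL2Z" "s = hat S"
    using SL2Z_generators by (auto simp: gens_eq_hat)
  then have "restrict (s \<circ> g) sl2 = hat (S ** t)"
    using hat_mult[of S t, where 'a='a] by simp
  with ts show ?case by (metis image_eqI SL2Z_mult)
next
  case (Ginv g s)
  then obtain t S where ts: "t \<in> SL2Z" "g = hat t" "S \<in> SL2Z" "s = hat S"
    using SL2Z_generators by (auto simp: gens_eq_hat)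
  then have "restrict (inv_into sl2 s \<circ> g) sl2 = hat (adj2 S ** t)"
    using inv_hat_comp[of S t, where 'a='a] by simp
  with ts show ?case by (metis image_eqI SL2Z_mult SL2Z_adj2)
qed

section \<open>SL_2(Z) is generated by My and Mz, so the image is contained in G\<close>

definition gen_mats :: "int mat2 set" where
  "gen_mats = {Mz, adj2 Mz, My, adj2 My}"

inductive_set words :: "int mat2 set" where
  word_one: "mat 1 \<in> words"
| word_step: "A \<in> words \<Longrightarrow> g \<in> gen_mats \<Longrightarrow> g ** A \<in> words"

lemma words_mult: "A \<in> words \<Longrightarrow> B \<in> words \<Longrightarrow> A ** B \<in> words"
  by (induction rule: words.induct) (auto simp: matrix_mul_assoc[symmetric] intro: words.intros)

lemma gen_mat_words: "Mz \<in> words" "adj2 Mz \<in> words" "My \<in> words" "adj2 My \<in> words"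
  using word_step[OF word_one] by (simp_all add: gen_mats_def)

definition shear :: "int \<Rightarrow> int mat2" where "shear k = mk 1 k 0 1"
definition rot :: "int mat2" where "rot = mk 0 (-1) 1 0"
definition rot_inv :: "int mat2" where "rot_inv = mk 0 1 (-1) 0"

lemma rot_words: "rot \<in> words" "rot_inv \<in> words"
proof -
  have "rot = Mz ** (My ** Mz)" by (simp add: mat2_eq mult2 rot_def Mz_def My_def)
  then show "rot \<in> words" by (metis words_mult gen_mat_words)
  have "rot_inv = adj2 Mz ** (adj2 My ** adj2 Mz)"
    by (simp add: mat2_eq mult2 rot_inv_def Mz_def My_def)
  then show "rot_inv \<in> words" by (metis words_mult gen_mat_words)
qed

lemma shear_words: "shear k \<in> words"
proof (induct k rule: int_induct[where k=0])
  case base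
  have "shear 0 = mat 1" by (simp add: shear_def mat2_eq mat2_ent)
  then show ?case by (simp add: word_one)
next
  case (step1 i)
  have "shear (i + 1) = adj2 Mz ** shear i" by (simp add: shear_def Mz_def mat2_eq mult2)
  then show ?case using word_step[OF step1(2), of "adj2 Mz"] by (simp add: gen_mats_def)
next
  case (step2 i)
  have "shear (i - 1) = Mz ** shear i" by (simp add: shear_def Mz_def mat2_eq mult2)
  then show ?case using word_step[OF step2(2), of Mz] by (simp add: gen_mats_def)
qed

text \<open>Euclidean algorithm: left multiplication by rot and a shear makes the lower-left
  entry the remainder of the upper-left entry modulo the lower-left one, so induction on
  its absolute value applies; once it vanishes, t is a shear or minus a shear.\<close>

lemma SL2Z_words: "det (t::int mat2) = 1 \<Longrightarrow> t \<in> words"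
proof (induction "nat \<bar>t$2$1\<bar>" arbitrary: t rule: less_induct)
  case less
  show ?case
  proof (cases "t$2$1 = 0")
    case True
    then have "t$1$1 * t$2$2 = 1" using less.prems by (simp add: det_2)
    then have "(t$1$1 = 1 \<and> t$2$2 = 1) \<or> (t$1$1 = -1 \<and> t$2$2 = -1)" by (simp add: zmult_eq_1_iff)
    then show ?thesis
    proof
      assume "t$1$1 = 1 \<and> t$2$2 = 1"
      then have "t = shear (t$1$2)" using True by (simp add: mat2_eq shear_def)
      then show ?thesis using shear_words by metis
    next
      assume "t$1$1 = -1 \<and> t$2$2 = -1"
      then have "t = rot ** (rot ** shear (- t$1$2))"
        using True by (simp add: mat2_eq shear_def rot_def mult2)
      then show ?thesis using shear_words rot_words words_mult by metis
    qed
  next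
    case False
    define q where "q = t$1$1 div t$2$1"
    define t' where "t' = rot ** (shear (-q) ** t)"
    have "t'$2$1 = t$1$1 mod t$2$1"
      using div_mult_mod_eq[of "t$1$1" "t$2$1"]
      by (simp add: t'_def mult2 rot_def shear_def q_def algebra_simps)
    then have "nat \<bar>t'$2$1\<bar> < nat \<bar>t$2$1\<bar>" using abs_mod_less[OF False] False by simp
    moreover have "det t' = 1"
    proof -
      have "det rot = 1" "det (shear (-q)) = 1" by (simp_all add: det_2 rot_def shear_def)
      then show ?thesis using less.prems by (simp add: t'_def det_mul)
    qed
    ultimately have "t' \<in> words" using less.hyps by blast
    moreover have "t = shear q ** (rot_inv ** t')"
      by (simp add: t'_def mat2_eq mult2 rot_def rot_inv_def shear_def algebra_simps)
    ultimately show ?thesis using shear_words rot_words words_mult by metis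
  qed
qed

lemma words_in_Ggrp:
  "A \<in> words \<Longrightarrow> A \<in> SL2Z \<and> (hat A :: 'a::field_char_0 mat2 \<Rightarrow> 'a mat2) \<in> Ggrp"
proof (induction rule: words.induct)
  case word_one
  then show ?case by (simp only: hat_one SL2Z_one Ggrp.Gid simp_thms)
next
  case (word_step A g)
  then have A: "A \<in> SL2Z" and GA: "(hat A :: 'a mat2 \<Rightarrow> 'a mat2) \<in> Ggrp" by auto
  have gens: "hat Mz \<in> (gens :: ('a mat2 \<Rightarrow> 'a mat2) set)" "hat My \<in> (gens :: ('a mat2 \<Rightarrow> 'a mat2) set)"
    by (simp_all add: gens_eq_hat)
  have "(hat (g ** A) :: 'a mat2 \<Rightarrow> 'a mat2) \<in> Ggrp"
    using word_step.hyps(2) unfolding gen_mats_def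
  proof (elim insertE)
    assume "g = Mz" then show ?thesis
      using Ggrp.Ggen[OF GA gens(1)] hat_mult[OF SL2Z_generators(3) A, where 'a='a] by simp
  next
    assume "g = My" then show ?thesis
      using Ggrp.Ggen[OF GA gens(2)] hat_mult[OF SL2Z_generators(2) A, where 'a='a] by simp
  next
    assume "g = adj2 Mz" then show ?thesis
      using Ggrp.Ginv[OF GA gens(1)] inv_hat_comp[OF SL2Z_generators(3) A, where 'a='a] by simp
  next
    assume "g = adj2 My" then show ?thesis
      using Ggrp.Ginv[OF GA gens(2)] inv_hat_comp[OF SL2Z_generators(2) A, where 'a='a] by simp
  qed simp
  moreover have "g ** A \<in> SL2Z"
    using word_step.hyps(2) A SL2Z_generators SL2Z_adj2 SL2Z_mult
    unfolding gen_mats_def by blast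
  ultimately show ?case by simp
qed

theorem theorem3p10:
  shows "(\<forall>\<theta>\<in>SL2Z. (hat \<theta> :: 'a::field_char_0 mat2 \<Rightarrow> 'a mat2) \<in> Aut_sl2)
    \<and> (\<forall>\<theta>1\<in>SL2Z. \<forall>\<theta>2\<in>SL2Z.
          (hat (\<theta>1 ** \<theta>2) :: 'a mat2 \<Rightarrow> 'a mat2) = restrict (hat \<theta>1 \<circ> hat \<theta>2) sl2)
    \<and> {\<theta>\<in>SL2Z. (hat \<theta> :: 'a mat2 \<Rightarrow> 'a mat2) = restrict id sl2} = {mat 1, - mat 1}
    \<and> (hat ` SL2Z :: ('a mat2 \<Rightarrow> 'a mat2) set) = Ggrp"
proof (intro conjI)
  show "\<forall>\<theta>\<in>SL2Z. (hat \<theta> :: 'a mat2 \<Rightarrow> 'a mat2) \<in> Aut_sl2"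
    using hat_aut by blast
  show "\<forall>\<theta>1\<in>SL2Z. \<forall>\<theta>2\<in>SL2Z.
          (hat (\<theta>1 ** \<theta>2) :: 'a mat2 \<Rightarrow> 'a mat2) = restrict (hat \<theta>1 \<circ> hat \<theta>2) sl2"
    using hat_mult by blast
  show "{\<theta>\<in>SL2Z. (hat \<theta> :: 'a mat2 \<Rightarrow> 'a mat2) = restrict id sl2} = {mat 1, - mat 1}"
    by (rule hat_kernel)
  have "(hat ` SL2Z :: ('a mat2 \<Rightarrow> 'a mat2) set) \<subseteq> Ggrp"
    using SL2Z_words words_in_Ggrp[where 'a='a] by (auto simp: SL2Z_def)
  then show "(hat ` SL2Z :: ('a mat2 \<Rightarrow> 'a mat2) set) = Ggrp"
    using Ggrp_subset_image by blast
qed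

end
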